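(* Let $X$ be an $\mathbb R^2$-valued OFBF on $\mathbb R^m$ satisfying the standing eigenvalue assumption and condition (NS). Then: (i) if $G^{\mathrm{ran}}_1(X)$ is conjugate to $\mathcal D_2$, then $-I\in G^{\mathrm{dom}}_1(X)$; (ii) if $G^{\mathrm{ran}}_1(X)$ is conjugate to $SO(2)$, then $-I\notin G^{\mathrm{dom}}_1(X)$; (iii) if $G^{\mathrm{ran}}_1(X)$ is conjugate to $O(2)$, then $-I\in G^{\mathrm{dom}}_1(X)$.
   Context: OFBF: an $\mathbb R^n$-valued field $X=\{X(t)\}_{t\in\mathbb R^m}$, proper ($X(t)$ not supported on a lower-dimensional hyperplane for $t\ne0$), nondegenerate (no projection $P\ne I$ with $X(t)=X(Pt)$ for all $t$), stochastically continuous, mean-zero Gaussian, stationary increments, and $\{X(c^Et)\}\overset{\mathcal L}=\{c^HX(t)\}$ for all $c>0$, $c^M=\exp(M\log c)$. Standing eigenvalue assumption: $0<\min\Re\,\mathrm{eig}(H)\le\max\Re\,\mathrm{eig}(H)<\min\Re\,\mathrm{eig}(E^* )=1$; then $X$ has harmonizable representation $X(t)\overset{\mathcal L}=\int(e^{i\langle t,x\rangle}-1)\widetilde B_F(dx)$ with Hermitian Gaussian random measure of control (spectral) measure $F_X$. Condition (NS): for every Borel $B$, $\max\mathrm{eig}F_X(B)>0$ (possibly $\infty$) implies $\min\mathrm{eig}F_X(B)>0$. $G^{\mathrm{dom}}_1(X)=\{A\in GL(m,\mathbb R):\{X(At)\}\overset{\mathcal L}=\{X(t)\}\}$, $G^{\mathrm{ran}}_1(X)=\{B\in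 GL(2,\mathbb R):\{BX(t)\}\overset{\mathcal L}=\{X(t)\}\}$. "Conjugate to $\mathcal O$" means equal to $W\mathcal OW^{-1}$ for some symmetric positive definite $W$. $\mathcal D_2=\{\pm I,\pm\mathrm{diag}(1,-1)\}$. *)

theory Defs
  imports "HOL-Analysis.Analysis" "HOL-Probability.Probability"
begin

primrec mpow :: "real^'n^'n \<Rightarrow> nat \<Rightarrow> real^'n^'n" where
  "mpow A 0 = mat 1"
| "mpow A (Suc k) = A ** mpow A k"

definition mexp :: "real^'n^'n \<Rightarrow> real^'n^'n" where
  "mexp A = (\<Sum>k. (1 / fact k) *\<^sub>R mpow A k)"

definition opow :: "real \<Rightarrow> real^'n^'n \<Rightarrow> real^'n^'n" where
  "opow c A = mexp (ln c *\<^sub>R A)"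

definition cmat :: "real^'n^'n \<Rightarrow> complex^'n^'n" where
  "cmat A = (\<chi> i j. complex_of_real (A $ i $ j))"

definition eigs :: "real^'n^'n \<Rightarrow> complex set" where
  "eigs A = {l. det (cmat A - mat l) = 0}"

definition sym_posdef :: "real^'n^'n \<Rightarrow> bool" where
  "sym_posdef W \<longleftrightarrow> transpose W = W \<and> (\<forall>x. x \<noteq> 0 \<longrightarrow> x \<bullet> (W *v x) > 0)"

definition GL :: "(real^'n^'n) set" where
  "GL = {A. invertible A}"

definition O2 :: "(real^2^2) set" where
  "O2 = {A. transpose A ** A = mat 1}"

definition SO2 :: "(real^2^2) set" where
  "SO2 = {A. transpose A ** A = mat 1 \<and> det A = 1}"

definition diag2 :: "real \<Rightarrow> real \<Rightarrow> real^2^2" where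
  "diag2 a b = (\<chi> i j. if i = j then (if i = 1 then a else b) else 0)"

definition D2 :: "(real^2^2) set" where
  "D2 = {mat 1, - mat 1, diag2 1 (-1), - diag2 1 (-1)}"

definition conj_to :: "(real^'n^'n) set \<Rightarrow> (real^'n^'n) set \<Rightarrow> bool" where
  "conj_to G S \<longleftrightarrow> (\<exists>W. sym_posdef W \<and> G = (\<lambda>Q. W ** Q ** matrix_inv W) ` S)"

definition eq_law ::
  "'w measure \<Rightarrow> ('i \<Rightarrow> 'w \<Rightarrow> 'v::topological_space) \<Rightarrow> ('i \<Rightarrow> 'w \<Rightarrow> 'v) \<Rightarrow> bool" where
  "eq_law M X Y \<longleftrightarrow> (\<forall>T. finite T \<longrightarrow>
     distr M (Pi\<^sub>M T (\<lambda>_. borel)) (\<lambda>\<omega>. \<lambda>t\<in>T. X t \<omega>) =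
     distr M (Pi\<^sub>M T (\<lambda>_. borel)) (\<lambda>\<omega>. \<lambda>t\<in>T. Y t \<omega>))"

definition centered_gaussian_field ::
  "'w measure \<Rightarrow> (real^'m \<Rightarrow> 'w \<Rightarrow> real^'n) \<Rightarrow> bool" where
  "centered_gaussian_field M X \<longleftrightarrow>
     (\<forall>t. X t \<in> borel_measurable M) \<and>
     (\<forall>T (a :: real^'m \<Rightarrow> real^'n). finite T \<longrightarrow>
        (\<exists>\<sigma>\<ge>0. distr M borel (\<lambda>\<omega>. \<Sum>t\<in>T. a t \<bullet> X t \<omega>) =
                 (if \<sigma> = 0 then return borel 0 else density lborel (normal_density 0 \<sigma>))))"

definition stoch_continuous ::
  "'w measure \<Rightarrow> (real^'m \<Rightarrow> 'w \<Rightarrow> real^'n) \<Rightarrow> bool" where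
  "stoch_continuous M X \<longleftrightarrow> (\<forall>t e. e > 0 \<longrightarrow>
     ((\<lambda>s. measure M {\<omega>\<in>space M. dist (X s \<omega>) (X t \<omega>) > e}) \<longlongrightarrow> 0) (at t))"

definition stationary_increments ::
  "'w measure \<Rightarrow> (real^'m \<Rightarrow> 'w \<Rightarrow> real^'n) \<Rightarrow> bool" where
  "stationary_increments M X \<longleftrightarrow> (\<forall>h. eq_law M (\<lambda>t \<omega>. X (t + h) \<omega> - X h \<omega>) X)"

definition proper_field ::
  "'w measure \<Rightarrow> (real^'m \<Rightarrow> 'w \<Rightarrow> real^'n) \<Rightarrow> bool" where
  "proper_field M X \<longleftrightarrow> (\<forall>t. t \<noteq> 0 \<longrightarrow>
     (\<forall>v b. v \<noteq> 0 \<longrightarrow> \<not> (AE \<omega> in M. v \<bullet> X t \<omega> = b)))"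

definition nondegenerate_field ::
  "'w measure \<Rightarrow> (real^'m \<Rightarrow> 'w \<Rightarrow> real^'n) \<Rightarrow> bool" where
  "nondegenerate_field M X \<longleftrightarrow> \<not> (\<exists>P :: real^'m^'m. P ** P = P \<and> P \<noteq> mat 1 \<and>
     (\<forall>t. AE \<omega> in M. X t \<omega> = X (P *v t) \<omega>))"

definition OFBF ::
  "'w measure \<Rightarrow> (real^'m \<Rightarrow> 'w \<Rightarrow> real^'n) \<Rightarrow> real^'m^'m \<Rightarrow> real^'n^'n \<Rightarrow> bool" where
  "OFBF M X E H \<longleftrightarrow> prob_space M \<and>
     proper_field M X \<and> nondegenerate_field M X \<and> stoch_continuous M X \<and>
     centered_gaussian_field M X \<and> stationary_increments M X \<and>
     (\<forall>c>0. eq_law M (\<lambda>t \<omega>. X (opow c E *v t) \<omega>) (\<lambda>t \<omega>. opow c H *v X t \<omega>))"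

definition standing_eig_assumption :: "real^'m^'m \<Rightarrow> real^'n^'n \<Rightarrow> bool" where
  "standing_eig_assumption E H \<longleftrightarrow>
     (\<forall>l\<in>eigs H. 0 < Re l \<and> Re l < 1) \<and>
     (\<forall>l\<in>eigs (transpose E). 1 \<le> Re l) \<and> (\<exists>l\<in>eigs (transpose E). Re l = 1)"

text \<open>A Hermitian matrix-valued spectral (control) measure F is encoded as
  F(dx) = g(x) mu(dx), with mu a scalar Borel measure and g Hermitian positive
  semidefinite.\<close>
definition herm_psd :: "complex^'n^'n \<Rightarrow> bool" where
  "herm_psd A \<longleftrightarrow> (\<forall>i j. A $ i $ j = cnj (A $ j $ i)) \<and>
     (\<forall>u :: complex^'n. 0 \<le> Re (\<Sum>i\<in>UNIV. \<Sum>j\<in>UNIV. cnj (u $ i) * A $ i $ j * u $ j))"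

definition spec_kernel :: "real^'m \<Rightarrow> real^'m \<Rightarrow> real^'m \<Rightarrow> complex" where
  "spec_kernel s t x = (cis (s \<bullet> x) - 1) * (cis (- (t \<bullet> x)) - 1)"

definition spectral_rep ::
  "'w measure \<Rightarrow> (real^'m \<Rightarrow> 'w \<Rightarrow> real^'n) \<Rightarrow> (real^'m) measure \<Rightarrow> (real^'m \<Rightarrow> complex^'n^'n) \<Rightarrow> bool" where
  "spectral_rep M X \<mu> g \<longleftrightarrow> sets \<mu> = sets borel \<and>
     (\<forall>i j. (\<lambda>x. g x $ i $ j) \<in> borel_measurable borel) \<and> (\<forall>x. herm_psd (g x)) \<and>
     (\<forall>s t j k. integrable M (\<lambda>\<omega>. X s \<omega> $ j * X t \<omega> $ k) \<and>
        integrable \<mu> (\<lambda>x. spec_kernel s t x * g x $ j $ k) \<and>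
        complex_of_real (\<integral>\<omega>. X s \<omega> $ j * X t \<omega> $ k \<partial>M) =
          (\<integral>x. spec_kernel s t x * g x $ j $ k \<partial>\<mu>))"

definition spec_qf ::
  "(real^'m) measure \<Rightarrow> (real^'m \<Rightarrow> complex^'n^'n) \<Rightarrow> (real^'m) set \<Rightarrow> complex^'n \<Rightarrow> ennreal" where
  "spec_qf \<mu> g B u = (\<integral>\<^sup>+x\<in>B. ennreal (Re (\<Sum>i\<in>UNIV. \<Sum>j\<in>UNIV. cnj (u $ i) * g x $ i $ j * u $ j)) \<partial>\<mu>)"

text \<open>Condition (NS): max eig F(B) > 0 implies min eig F(B) > 0 (eigenvalues of the
  possibly infinite Hermitian matrix F(B) taken as extremal Rayleigh quotients).\<close>
definition cond_NS ::
  "(real^'m) measure \<Rightarrow> (real^'m \<Rightarrow> complex^'n^'n) \<Rightarrow> bool" where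
  "cond_NS \<mu> g \<longleftrightarrow> (\<forall>B\<in>sets borel.
     (SUP u\<in>{u. norm u = 1}. spec_qf \<mu> g B u) > 0 \<longrightarrow> (INF u\<in>{u. norm u = 1}. spec_qf \<mu> g B u) > 0)"

definition Gdom :: "'w measure \<Rightarrow> (real^'m \<Rightarrow> 'w \<Rightarrow> real^'n) \<Rightarrow> (real^'m^'m) set" where
  "Gdom M X = {A. invertible A \<and> eq_law M (\<lambda>t. X (A *v t)) X}"

definition Gran :: "'w measure \<Rightarrow> (real^'m \<Rightarrow> 'w \<Rightarrow> real^'n) \<Rightarrow> (real^'n^'n) set" where
  "Gran M X = {B. invertible B \<and> eq_law M (\<lambda>t \<omega>. B *v X t \<omega>) X}"

end

theory Submission
  imports Defs
begin

(* The law of the centred Gaussian field X is determined by its cross-covariances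
   C(s,t) = E[X(s) X(t)^T]: every linear combination of values of X is centred normal, so equal
   second moments give equal one-dimensional laws, and by the Cramer-Wold device these determine
   the finite-dimensional laws.  (Characteristic functions of laws on (R^n)^T are compared through
   trigonometric polynomials, Stone-Weierstrass on the circle, and indicators of boxes obtained by
   wrapping ever longer intervals around the circle.)  Hence B is in Gran(X) iff B C(s,t) B^T = C(s,t)
   for all s, t; and since the spectral density is Hermitian, C(-s,-t) = C(t,s) = C(s,t)^T, so -I
   is in Gdom(X) iff every C(s,t) is symmetric.
   Write C = W Y W for the conjugating matrix W.  If W diag(1,-1) W^-1 is in Gran(X), then Y is
   diagonal, so C is symmetric: this gives (i) and (iii).  In case (ii), symmetry of Y together with
   invariance under the quarter turn (which lies in SO(2)) again makes Y diagonal; then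
   W diag(1,-1) W^-1 lies in Gran(X) = W SO(2) W^-1, impossible since det diag(1,-1) = -1. *)

section \<open>Trigonometric polynomials\<close>

inductive_set trig_polys :: "('a \<Rightarrow> real) set \<Rightarrow> ('a \<Rightarrow> complex) set"
  for \<Lambda> :: "('a \<Rightarrow> real) set" where
  zero: "(\<lambda>x. 0) \<in> trig_polys \<Lambda>"
| cis: "\<xi> \<in> \<Lambda> \<Longrightarrow> (\<lambda>x. c * cis (\<xi> x)) \<in> trig_polys \<Lambda>"
| add: "f \<in> trig_polys \<Lambda> \<Longrightarrow> g \<in> trig_polys \<Lambda> \<Longrightarrow> (\<lambda>x. f x + g x) \<in> trig_polys \<Lambda>"

lemma trig_polys_const: "(\<lambda>x. 0) \<in> \<Lambda> \<Longrightarrow> (\<lambda>x. c) \<in> trig_polys \<Lambda>"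
  using trig_polys.cis[of "\<lambda>x. 0" \<Lambda> c] by simp

lemma trig_polys_mult:
  assumes add_closed: "\<And>\<xi> \<eta>. \<xi> \<in> \<Lambda> \<Longrightarrow> \<eta> \<in> \<Lambda> \<Longrightarrow> (\<lambda>x. \<xi> x + \<eta> x) \<in> \<Lambda>"
    and "f \<in> trig_polys \<Lambda>" "g \<in> trig_polys \<Lambda>"
  shows "(\<lambda>x. f x * g x) \<in> trig_polys \<Lambda>"
  using assms(2)
proof induction
  case zero
  then show ?case by (simp add: trig_polys.zero)
next
  case (cis \<xi> c)
  from assms(3) show ?case
  proof induction
    case zero
    then show ?case by (simp add: trig_polys.zero)
  next
    case (cis \<eta> d)
    have "(\<lambda>x. c * cis (\<xi> x) * (d * cis (\<eta> x))) = (\<lambda>x. (c * d) * cis (\<xi> x + \<eta> x))"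
      by (simp add: fun_eq_iff cis_mult)
    then show ?case using trig_polys.cis add_closed \<open>\<xi> \<in> \<Lambda>\<close> cis.hyps by metis
  next
    case (add g g')
    then show ?case by (simp add: distrib_left trig_polys.add)
  qed
next
  case (add f f')
  then show ?case by (simp add: distrib_right trig_polys.add)
qed

lemma trig_polys_prod:
  assumes "finite I" "(\<lambda>x. 0) \<in> \<Lambda>"
    and "\<And>\<xi> \<eta>. \<xi> \<in> \<Lambda> \<Longrightarrow> \<eta> \<in> \<Lambda> \<Longrightarrow> (\<lambda>x. \<xi> x + \<eta> x) \<in> \<Lambda>"
    and "\<And>i. i \<in> I \<Longrightarrow> f i \<in> trig_polys \<Lambda>"
  shows "(\<lambda>x. \<Prod>i\<in>I. f i x) \<in> trig_polys \<Lambda>"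
  using assms(1,4)
proof (induction I rule: finite_induct)
  case empty
  show ?case using trig_polys_const[OF assms(2), of 1] by simp
next
  case (insert i I)
  have "(\<lambda>x. f i x * (\<Prod>i\<in>I. f i x)) \<in> trig_polys \<Lambda>"
    using insert.prems insert.IH by (intro trig_polys_mult[OF assms(3)]) blast+
  then show ?case unfolding prod.insert[OF insert.hyps] .
qed

lemma trig_polys_compose:
  assumes "f \<in> trig_polys \<Lambda>" "\<And>\<xi>. \<xi> \<in> \<Lambda> \<Longrightarrow> (\<lambda>x. \<xi> (h x)) \<in> \<Lambda>'"
  shows "(\<lambda>x. f (h x)) \<in> trig_polys \<Lambda>'"
  using assms(1)
proof induction
  case (cis \<xi> c)
  show ?case using trig_polys.cis[OF assms(2)[OF cis]] .
qed (simp_all add: trig_polys.zero trig_polys.add)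

lemma trig_polys_bounded:
  assumes "f \<in> trig_polys \<Lambda>"
  obtains B where "\<And>x. norm (f x) \<le> B"
proof -
  from assms have "\<exists>B. \<forall>x. norm (f x) \<le> B"
  proof induction
    case (add f g)
    then obtain B C where "\<forall>x. norm (f x) \<le> B" "\<forall>x. norm (g x) \<le> C" by blast
    then have "\<forall>x. norm (f x + g x) \<le> B + C" by (metis add_mono norm_triangle_le)
    then show ?case by blast
  qed (auto simp: norm_mult)
  then show ?thesis using that by blast
qed

lemma trig_polys_measurable:
  assumes "f \<in> trig_polys \<Lambda>" "\<Lambda> \<subseteq> borel_measurable M"
  shows "f \<in> borel_measurable M"
  using assms(1)
proof induction
  case (cis \<xi> c)
  have "(\<lambda>y. c * cis y) \<in> borel_measurable borel"
    by (intro borel_measurable_continuous_onI continuous_intros)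
  with cis assms(2) show ?case by (auto intro: measurable_compose)
qed simp_all

lemma integrable_trig_polys:
  assumes "finite_measure M" "\<Lambda> \<subseteq> borel_measurable M" "f \<in> trig_polys \<Lambda>"
  shows "integrable M f"
proof -
  obtain B where "\<And>x. norm (f x) \<le> B" using trig_polys_bounded[OF assms(3)] by blast
  then show ?thesis
    using finite_measure.integrable_const_bound[OF assms(1)] trig_polys_measurable[OF assms(3,2)] by blast
qed

lemma integral_trig_polys_eqI:
  assumes "finite_measure P" "finite_measure Q" "\<Lambda> \<subseteq> borel_measurable P" "\<Lambda> \<subseteq> borel_measurable Q"
    and char_eq: "\<And>\<xi>. \<xi> \<in> \<Lambda> \<Longrightarrow> (\<integral>x. cis (\<xi> x) \<partial>P) = (\<integral>x. cis (\<xi> x) \<partial>Q)"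
    and "f \<in> trig_polys \<Lambda>"
  shows "(\<integral>x. f x \<partial>P) = (\<integral>x. f x \<partial>Q)"
  using assms(6)
proof induction
  case (cis \<xi> c)
  then show ?case using char_eq by simp
next
  case (add f g)
  then show ?case using integrable_trig_polys[OF assms(1,3)] integrable_trig_polys[OF assms(2,4)] by simp
qed simp

lemma range_times_add_closed:
  assumes "\<xi> \<in> range (*)" "\<eta> \<in> range (*)"
  shows "(\<lambda>x::real. \<xi> x + \<eta> x) \<in> range (*)"
proof -
  from assms obtain v w where "\<xi> = (*) v" "\<eta> = (*) w" by blast
  then have "(\<lambda>x. \<xi> x + \<eta> x) = (*) (v + w)" by (simp add: fun_eq_iff distrib_right)
  then show ?thesis by simp
qed

lemma trig_polys_cis_freq: "(\<lambda>y. c * cis (w * y)) \<in> trig_polys (range (*))"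
  using trig_polys.cis[of "(*) w" "range (*)" c] by simp

lemma trig_polys_Re_Im_cis:
  "(\<lambda>y. complex_of_real (Re (cis y))) \<in> trig_polys (range (*))"
  "(\<lambda>y. complex_of_real (Im (cis y))) \<in> trig_polys (range (*))"
proof -
  have "(\<lambda>y. complex_of_real (Re (cis y))) = (\<lambda>y. 1/2 * cis (1 * y) + 1/2 * cis (-1 * y))"
    "(\<lambda>y. complex_of_real (Im (cis y))) = (\<lambda>y. -\<i>/2 * cis (1 * y) + \<i>/2 * cis (-1 * y))"
    by (simp_all add: fun_eq_iff complex_eq_iff)
  then show "(\<lambda>y. complex_of_real (Re (cis y))) \<in> trig_polys (range (*))"
    "(\<lambda>y. complex_of_real (Im (cis y))) \<in> trig_polys (range (*))"
    using trig_polys.add[OF trig_polys_cis_freq trig_polys_cis_freq] by (simp_all only:)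
qed

lemma trig_polys_dense_circle:
  fixes \<phi> :: "complex \<Rightarrow> real"
  assumes "continuous_on (sphere 0 1) \<phi>" "e > 0"
  obtains f where "f \<in> trig_polys (range (*))" "\<And>y. cmod (of_real (\<phi> (cis y)) - f y) < e"
proof -
  let ?A = "\<lambda>g. continuous_on (sphere 0 1) g \<and> (\<lambda>y. complex_of_real (g (cis y))) \<in> trig_polys (range (*))"
  have "\<exists>g. ?A g \<and> (\<forall>z\<in>sphere 0 1. \<bar>\<phi> z - g z\<bar> < e)"
  proof (rule Stone_Weierstrass_HOL)
    show "?A (\<lambda>z. c)" for c
      using trig_polys_cis_freq[of "of_real c" 0] by simp
    show "?A (\<lambda>z. f z + g z)" if "?A f \<and> ?A g" for f g
    proof
      show "continuous_on (sphere 0 1) (\<lambda>z. f z + g z)"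
        using that by (intro continuous_on_add) blast+
      have "(\<lambda>y. of_real (f (cis y)) + of_real (g (cis y))) \<in> trig_polys (range (*))"
        using that by (intro trig_polys.add) blast+
      then show "(\<lambda>y. complex_of_real (f (cis y) + g (cis y))) \<in> trig_polys (range (*))"
        by (simp only: of_real_add)
    qed
    show "?A (\<lambda>z. f z * g z)" if "?A f \<and> ?A g" for f g
    proof
      show "continuous_on (sphere 0 1) (\<lambda>z. f z * g z)"
        using that by (intro continuous_on_mult) blast+
      have "(\<lambda>y. of_real (f (cis y)) * of_real (g (cis y))) \<in> trig_polys (range (*))"
        using that by (intro trig_polys_mult[OF range_times_add_closed]) blast+
      then show "(\<lambda>y. complex_of_real (f (cis y) * g (cis y))) \<in> trig_polys (range (*))"
        by (simp only: of_real_mult)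
    qed
    have "?A Re" "?A Im"
      using trig_polys_Re_Im_cis continuous_on_Re[OF continuous_on_id] continuous_on_Im[OF continuous_on_id]
      by blast+
    then show "\<exists>f. ?A f \<and> f z \<noteq> f w" if "z \<in> sphere 0 1 \<and> w \<in> sphere 0 1 \<and> z \<noteq> w" for z w
      using that complex_eq_iff by blast
  qed (use assms in auto)
  then obtain g where g: "?A g" "\<forall>z\<in>sphere 0 1. \<bar>\<phi> z - g z\<bar> < e" by blast
  show ?thesis
  proof (rule that)
    show "(\<lambda>y. complex_of_real (g (cis y))) \<in> trig_polys (range (*))" using g(1) by blast
    show "cmod (of_real (\<phi> (cis y)) - of_real (g (cis y))) < e" for y
      using g(2) by (metis norm_of_real of_real_diff mem_sphere_0 norm_cis)
  qed
qed

lemma trig_polys_LIMSEQ_circle: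
  fixes \<phi> :: "complex \<Rightarrow> real"
  assumes cont: "continuous_on (sphere 0 1) \<phi>"
  obtains f :: "nat \<Rightarrow> real \<Rightarrow> complex" and B where "\<And>k. f k \<in> trig_polys (range (*))"
    "\<And>k y. cmod (f k y) \<le> B" "\<And>y. (\<lambda>k. f k y) \<longlonglongrightarrow> of_real (\<phi> (cis y))"
proof -
  have "\<exists>g. g \<in> trig_polys (range (*)) \<and> (\<forall>y. cmod (of_real (\<phi> (cis y)) - g y) < inverse (Suc k))"
    for k
    by (rule trig_polys_dense_circle[OF cont, of "inverse (Suc k)"]) auto
  then obtain f where f: "\<And>k. f k \<in> trig_polys (range (*))"
    "\<And>k y. cmod (of_real (\<phi> (cis y)) - f k y) < inverse (Suc k)"
    by metis
  have "bounded (\<phi> ` sphere 0 1)"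
    by (intro compact_imp_bounded compact_continuous_image cont compact_sphere)
  then obtain C where C: "\<forall>z\<in>sphere 0 1. \<bar>\<phi> z\<bar> \<le> C"
    by (auto simp: bounded_iff)
  show ?thesis
  proof (rule that[OF f(1)])
    show "cmod (f k y) \<le> C + 1" for k y
    proof -
      have "cmod (f k y) \<le> \<bar>\<phi> (cis y)\<bar> + inverse (Suc k)"
        using f(2)[of y k] norm_triangle_ineq3[of "of_real (\<phi> (cis y))" "f k y"]
        by (simp add: norm_minus_commute)
      also have "\<dots> \<le> C + 1"
        using C by (intro add_mono) (auto simp: field_simps)
      finally show ?thesis .
    qed
    show "(\<lambda>k. f k y) \<longlonglongrightarrow> of_real (\<phi> (cis y))" for y
    proof (rule LIM_zero_cancel, rule Lim_null_comparison[OF _ LIMSEQ_inverse_real_of_nat])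
      show "\<forall>\<^sub>F k in sequentially. cmod (f k y - of_real (\<phi> (cis y))) \<le> inverse (Suc k)"
        using f(2) by (simp add: norm_minus_commute less_imp_le)
    qed
  qed
qed

section \<open>Laws on finite products are determined by their characteristic functions\<close>

lemma indicator_open_LIMSEQ:
  fixes U :: "'a::metric_space set"
  assumes "open U"
  obtains f :: "nat \<Rightarrow> 'a \<Rightarrow> real"
  where "\<And>k. continuous_on UNIV (f k)" "\<And>k x. 0 \<le> f k x \<and> f k x \<le> 1"
    "\<And>x. (\<lambda>k. f k x) \<longlonglongrightarrow> indicator U x"
proof (cases "U = UNIV")
  case True
  \<comment> \<open>separate case, as infdist x {} = 0\<close>
  show ?thesis by (rule that[of "\<lambda>k x. 1"]) (simp_all add: True)
next
  case False
  define f where "f k x = min 1 (real k * infdist x (- U))" for k x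
  show ?thesis
  proof (rule that[of f])
    show "continuous_on UNIV (f k)" for k
      unfolding f_def by (intro continuous_intros)
    show "0 \<le> f k x \<and> f k x \<le> 1" for k x
      unfolding f_def by (simp add: infdist_nonneg)
    show "(\<lambda>k. f k x) \<longlonglongrightarrow> indicator U x" for x
    proof (cases "x \<in> U")
      case True
      have "infdist x (- U) > 0"
        using assms False True by (intro infdist_pos_not_in_closed) auto
      then have "filterlim (\<lambda>k. infdist x (- U) * real k) at_top sequentially"
        by (intro filterlim_tendsto_pos_mult_at_top[OF tendsto_const _ filterlim_real_sequentially])
      then have "\<forall>\<^sub>F k in sequentially. 1 \<le> real k * infdist x (- U)"
        by (simp add: filterlim_at_top mult.commute)
      then have "\<forall>\<^sub>F k in sequentially. f k x = 1"
        by eventually_elim (simp add: f_def)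
      then show ?thesis using True by (simp add: tendsto_eventually)
    next
      case False
      then show ?thesis by (simp add: f_def infdist_zero)
    qed
  qed
qed

lemma cis_scaled_inj:
  assumes "L > 0" "\<bar>y\<bar> < L" "\<bar>y'\<bar> \<le> L" "cis (pi / L * y') = cis (pi / L * y)"
  shows "y' = y"
proof -
  have "sin (pi / L * y') = sin (pi / L * y) \<and> cos (pi / L * y') = cos (pi / L * y)"
    using assms(4) by (metis cis.sel)
  then obtain n :: int where n: "pi / L * y' = pi / L * y + 2 * pi * n"
    using sin_cos_eq_iff by blast
  then have "pi * y' = pi * (y + 2 * L * n)"
    using assms(1) by (simp add: field_simps)
  then have "y' = y + 2 * L * n"
    by simp
  moreover have "\<bar>y' - y\<bar> < 2 * L"
    using assms(2,3) by linarith
  ultimately have "\<bar>real_of_int n\<bar> < 1"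
    using assms(1) by (simp add: abs_mult)
  then have "n = 0" by linarith
  with \<open>y' = y + 2 * L * n\<close> show ?thesis by simp
qed

text \<open>Wrapping [-L, L] once around the unit circle turns a set of reals into a set of the
  circle with the same indicator on (-L, L), open if the original set is.\<close>

definition circle_code :: "real \<Rightarrow> real set \<Rightarrow> complex set" where
  "circle_code L A = - (\<lambda>y. cis (pi / L * y)) ` ({-L..L} - A)"

lemma indicator_circle_code:
  assumes "L > 0" "\<bar>y\<bar> < L"
  shows "indicator (circle_code L A) (cis (pi / L * y)) = (indicator A y :: real)"
proof (cases "y \<in> A")
  case True
  have "cis (pi / L * y) \<notin> (\<lambda>y. cis (pi / L * y)) ` ({-L..L} - A)"
  proof
    assume "cis (pi / L * y) \<in> (\<lambda>y. cis (pi / L * y)) ` ({-L..L} - A)"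
    then obtain y' where y': "y' \<in> {-L..L} - A" "cis (pi / L * y) = cis (pi / L * y')"
      by blast
    then have "y' = y"
      using cis_scaled_inj[OF assms, of y'] by (simp add: abs_le_iff)
    with True y'(1) show False by simp
  qed
  with True show ?thesis by (simp add: circle_code_def)
next
  case False
  with assms(2) have "y \<in> {-L..L} - A" by auto
  then have "cis (pi / L * y) \<notin> circle_code L A"
    unfolding circle_code_def by blast
  with False show ?thesis by simp
qed

lemma open_circle_code: "open A \<Longrightarrow> open (circle_code L A)"
  unfolding circle_code_def
  by (intro open_Compl compact_imp_closed compact_continuous_image continuous_intros compact_diff) auto

lemma mem_box_One_if_norm_less:
  fixes x :: "'a::euclidean_space"
  assumes "norm x < r"
  shows "x \<in> box (- r *\<^sub>R One) (r *\<^sub>R One)"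
proof -
  have "\<bar>x \<bullet> i\<bar> < r" if "i \<in> Basis" for i
    using Basis_le_norm[OF that, of x] assms by linarith
  then show ?thesis by (force simp: mem_box inner_sum_Basis abs_less_iff)
qed

lemma boxes_countable_cover:
  "\<exists>S\<subseteq>range (\<lambda>(a, b). box a b). countable S \<and> (UNIV :: 'a::euclidean_space set) = \<Union>S"
proof (intro exI conjI)
  let ?S = "range (\<lambda>n::nat. box (- real n *\<^sub>R One) (real n *\<^sub>R One) :: 'a set)"
  have "box (- real n *\<^sub>R One) (real n *\<^sub>R One) \<in> range (\<lambda>(a, b). box a b)" for n
    using rangeI[of "\<lambda>(a, b). box a b" "(- real n *\<^sub>R One, real n *\<^sub>R One)"] by simp
  then show "?S \<subseteq> range (\<lambda>(a, b). box a b)" by blast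
  show "countable ?S" by simp
  have "x \<in> \<Union>?S" for x :: 'a
  proof -
    obtain n :: nat where "norm x < n" using reals_Archimedean2 by blast
    then show ?thesis using mem_box_One_if_norm_less by blast
  qed
  then show "UNIV = \<Union>?S" by blast
qed

lemma sets_PiM_borel_boxes:
  fixes T :: "'i set"
  assumes "finite T"
  shows "sets (Pi\<^sub>M T (\<lambda>_. borel :: 'a::euclidean_space measure)) =
    sigma_sets (\<Pi>\<^sub>E t\<in>T. UNIV) {\<Pi>\<^sub>E t\<in>T. box (a t) (b t) | a b. True}"
proof -
  let ?B = "range (\<lambda>(a, b). box a b :: 'a set)"
  let ?R = "{\<Pi>\<^sub>E t\<in>T. box (a t) (b t) | a b. True} :: ('i \<Rightarrow> 'a) set set"
  let ?E = "{{f \<in> \<Pi>\<^sub>E t\<in>T. UNIV. \<forall>t\<in>J. f t \<in> A t} | A J. J \<in> {T} \<and> A \<in> Pi J (\<lambda>_. ?B)}"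
  have restrict_eq: "{f \<in> \<Pi>\<^sub>E t\<in>T. UNIV. \<forall>t\<in>T. f t \<in> A t} = Pi\<^sub>E T A" for A :: "'i \<Rightarrow> 'a set"
    by (auto simp: PiE_iff extensional_def)
  have E: "?E = ?R"
  proof (intro set_eqI iffI)
    fix X assume "X \<in> ?E"
    then obtain A where A: "X = {f \<in> \<Pi>\<^sub>E t\<in>T. UNIV. \<forall>t\<in>T. f t \<in> A t}" "A \<in> Pi T (\<lambda>_. ?B)"
      by force
    from A(2) have "\<forall>t\<in>T. \<exists>a b. A t = box a b" by fastforce
    then obtain a b where "\<And>t. t \<in> T \<Longrightarrow> A t = box (a t) (b t)" by metis
    then have "X = (\<Pi>\<^sub>E t\<in>T. box (a t) (b t))"
      unfolding A(1) restrict_eq by (simp cong: PiE_cong)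
    then show "X \<in> ?R" by blast
  next
    fix X assume "X \<in> ?R"
    then obtain a b where "X = {f \<in> \<Pi>\<^sub>E t\<in>T. UNIV. \<forall>t\<in>T. f t \<in> box (a t) (b t)}"
      unfolding restrict_eq by auto
    then show "X \<in> ?E"
      by (intro CollectI exI[of _ "\<lambda>t. box (a t) (b t)"] exI[of _ T]) auto
  qed
  have "sets (Pi\<^sub>M T (\<lambda>_. borel :: 'a measure)) = sets (Pi\<^sub>M T (\<lambda>_. sigma UNIV ?B))"
    by (simp only: borel_eq_box)
  also have "\<dots> = sets (sigma (\<Pi>\<^sub>E t\<in>T. UNIV) ?E)"
    using boxes_countable_cover assms by (intro sets_PiM_sigma) auto
  also have "\<dots> = sigma_sets (\<Pi>\<^sub>E t\<in>T. UNIV) ?R"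
    unfolding E by (rule sets_measure_of) auto
  finally show ?thesis .
qed

lemma Union_PiE_boxes:
  assumes "finite T"
  shows "(\<Union>n::nat. \<Pi>\<^sub>E t\<in>T. box (- real n *\<^sub>R One) (real n *\<^sub>R One)) =
    (\<Pi>\<^sub>E t\<in>T. UNIV :: ('i \<Rightarrow> 'a::euclidean_space) set)"
proof (intro set_eqI iffI)
  fix f :: "'i \<Rightarrow> 'a" assume f: "f \<in> (\<Pi>\<^sub>E t\<in>T. UNIV)"
  obtain n :: nat where n: "(\<Sum>t\<in>T. norm (f t)) < n"
    using reals_Archimedean2 by blast
  have "f t \<in> box (- real n *\<^sub>R One) (real n *\<^sub>R One)" if "t \<in> T" for t
  proof -
    have "norm (f t) \<le> (\<Sum>t\<in>T. norm (f t))"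
      using assms that by (intro member_le_sum) auto
    then show ?thesis
      using n by (intro mem_box_One_if_norm_less) linarith
  qed
  with f show "f \<in> (\<Union>n. \<Pi>\<^sub>E t\<in>T. box (- real n *\<^sub>R One) (real n *\<^sub>R One))" by auto
qed auto

lemma PiM_eqI_boxes:
  fixes P Q :: "('i \<Rightarrow> 'a::euclidean_space) measure"
  assumes T: "finite T" and "finite_measure P"
    and sets: "sets P = sets (Pi\<^sub>M T (\<lambda>_. borel))" "sets Q = sets (Pi\<^sub>M T (\<lambda>_. borel))"
    and eq: "\<And>a b. emeasure P (\<Pi>\<^sub>E t\<in>T. box (a t) (b t)) = emeasure Q (\<Pi>\<^sub>E t\<in>T. box (a t) (b t))"
  shows "P = Q"
proof (rule measure_eqI_generator_eq)
  let ?E = "{\<Pi>\<^sub>E t\<in>T. box (a t) (b t) | a b. True} :: ('i \<Rightarrow> 'a) set set"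
  show "Int_stable ?E"
  proof (rule Int_stableI)
    fix X Y assume "X \<in> ?E" "Y \<in> ?E"
    then obtain a b c d where "X = (\<Pi>\<^sub>E t\<in>T. box (a t) (b t))" "Y = (\<Pi>\<^sub>E t\<in>T. box (c t) (d t))"
      by blast
    moreover define p q where "p t = (\<Sum>i\<in>Basis. max (a t \<bullet> i) (c t \<bullet> i) *\<^sub>R i)"
      and "q t = (\<Sum>i\<in>Basis. min (b t \<bullet> i) (d t \<bullet> i) *\<^sub>R i)" for t
    ultimately have "X \<inter> Y = (\<Pi>\<^sub>E t\<in>T. box (p t) (q t))"
      by (simp add: PiE_Int box_Int_box)
    then show "X \<inter> Y \<in> ?E" by blast
  qed
  show "?E \<subseteq> Pow (\<Pi>\<^sub>E t\<in>T. UNIV)" by auto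
  show "sets P = sigma_sets (\<Pi>\<^sub>E t\<in>T. UNIV) ?E" "sets Q = sigma_sets (\<Pi>\<^sub>E t\<in>T. UNIV) ?E"
    using sets sets_PiM_borel_boxes[OF T] by simp_all
  show "X \<in> ?E \<Longrightarrow> emeasure P X = emeasure Q X" for X
    using eq by blast
  define C where "C n = (\<Pi>\<^sub>E t\<in>T. box (- real n *\<^sub>R One) (real n *\<^sub>R One) :: 'a set)" for n :: nat
  have "C n \<in> ?E" for n
    unfolding C_def by (intro CollectI exI[of _ "\<lambda>_. - real n *\<^sub>R One"] exI[of _ "\<lambda>_. real n *\<^sub>R One"]) simp
  then show "range C \<subseteq> ?E" by blast
  show "emeasure P (C n) \<noteq> \<infinity>" for n
    using assms(2) by (simp add: finite_measure.emeasure_finite)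
  show "(\<Union>n. C n) = (\<Pi>\<^sub>E t\<in>T. UNIV)"
    unfolding C_def by (rule Union_PiE_boxes[OF T])
qed

definition coord :: "('i \<Rightarrow> real^'n) \<Rightarrow> 'i \<times> 'n \<Rightarrow> real" where
  "coord x i = x (fst i) $ snd i"

lemma borel_measurable_coord:
  assumes "i \<in> T \<times> UNIV"
  shows "(\<lambda>x. coord x i) \<in> borel_measurable (Pi\<^sub>M T (\<lambda>_. borel))"
proof -
  from assms have "fst i \<in> T" by auto
  from measurable_compose[OF measurable_component_singleton[OF this] borel_measurable_nth[of "snd i"]]
  show ?thesis unfolding coord_def .
qed

lemma borel_measurable_prod_coord:
  fixes g :: "'i \<times> 'n::finite \<Rightarrow> real \<Rightarrow> real"
  assumes "finite T" "\<And>i. g i \<in> borel_measurable borel"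
  shows "(\<lambda>x. \<Prod>i\<in>T \<times> UNIV. g i (coord x i)) \<in> borel_measurable (Pi\<^sub>M T (\<lambda>_. borel))"
  using borel_measurable_coord by (intro borel_measurable_prod measurable_compose[OF _ assms(2)])

definition linear_forms :: "'i set \<Rightarrow> (('i \<Rightarrow> real^'n) \<Rightarrow> real) set" where
  "linear_forms T = range (\<lambda>a x. \<Sum>t\<in>T. a t \<bullet> x t)"

lemma zero_in_linear_forms: "(\<lambda>x. 0) \<in> linear_forms T"
  unfolding linear_forms_def by (rule range_eqI[of _ _ "\<lambda>_. 0"]) simp

lemma linear_forms_add:
  assumes "\<xi> \<in> linear_forms T" "\<eta> \<in> linear_forms T"
  shows "(\<lambda>x. \<xi> x + \<eta> x) \<in> linear_forms T"
proof -
  from assms obtain a b where "\<xi> = (\<lambda>x. \<Sum>t\<in>T. a t \<bullet> x t)" "\<eta> = (\<lambda>x. \<Sum>t\<in>T. b t \<bullet> x t)"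
    by (auto simp: linear_forms_def)
  then show ?thesis unfolding linear_forms_def
    by (intro range_eqI[of _ _ "\<lambda>t. a t + b t"]) (simp add: inner_add_left sum.distrib)
qed

lemma coord_in_linear_forms:
  assumes "finite T" "i \<in> T \<times> UNIV"
  shows "(\<lambda>x. c * coord x i) \<in> linear_forms T"
proof -
  obtain t j where i: "i = (t, j)" "t \<in> T" using assms(2) by auto
  have "(\<Sum>s\<in>T. (if s = t then c *\<^sub>R axis j 1 else 0) \<bullet> x s) = c * coord x i" for x
    using assms(1) i by (simp add: if_distrib[of "\<lambda>v. v \<bullet> _"] inner_axis' coord_def cong: if_cong)
  then show ?thesis unfolding linear_forms_def
    by (intro range_eqI[of _ _ "\<lambda>s. if s = t then c *\<^sub>R axis j 1 else 0"]) simp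
qed

lemma linear_forms_measurable:
  fixes T :: "'i set"
  shows "linear_forms T \<subseteq> borel_measurable (Pi\<^sub>M T (\<lambda>_. borel :: (real^'n) measure))"
proof -
  have "(\<lambda>x. \<Sum>t\<in>T. a t \<bullet> x t) \<in> borel_measurable (Pi\<^sub>M T (\<lambda>_. borel))" for a :: "'i \<Rightarrow> real^'n"
    by (rule borel_measurable_sum) measurable
  then show ?thesis by (auto simp: linear_forms_def)
qed

lemma indicator_PiE_box_coord:
  fixes a b :: "'i \<Rightarrow> real^'n"
  assumes "finite T" "x \<in> (\<Pi>\<^sub>E t\<in>T. UNIV)"
  shows "indicator (\<Pi>\<^sub>E t\<in>T. box (a t) (b t)) x =
    (\<Prod>i\<in>T \<times> UNIV. indicator {coord a i<..<coord b i} (coord x i) :: real)"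
proof -
  have mem: "x \<in> (\<Pi>\<^sub>E t\<in>T. box (a t) (b t)) \<longleftrightarrow> (\<forall>i\<in>T \<times> UNIV. coord x i \<in> {coord a i<..<coord b i})"
    using assms(2) by (auto simp: PiE_iff mem_box_cart coord_def)
  show ?thesis
  proof (cases "x \<in> (\<Pi>\<^sub>E t\<in>T. box (a t) (b t))")
    case True
    then show ?thesis using mem by (simp add: prod.neutral)
  next
    case False
    with mem obtain i where "i \<in> T \<times> UNIV" "coord x i \<notin> {coord a i<..<coord b i}" by blast
    then have "(\<Prod>i\<in>T \<times> UNIV. indicator {coord a i<..<coord b i} (coord x i) :: real) = 0"
      using assms(1) by (intro prod_zero bexI[of _ i]) auto
    with False show ?thesis by simp
  qed
qed

locale same_char_fun =
  fixes T :: "'i set" and P Q :: "('i \<Rightarrow> real^'n) measure"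
  assumes finite_T: "finite T"
    and prob_space_P: "prob_space P" and prob_space_Q: "prob_space Q"
    and sets_P: "sets P = sets (Pi\<^sub>M T (\<lambda>_. borel))"
    and sets_Q: "sets Q = sets (Pi\<^sub>M T (\<lambda>_. borel))"
    and char_eq: "\<And>a. (\<integral>x. cis (\<Sum>t\<in>T. a t \<bullet> x t) \<partial>P) = (\<integral>x. cis (\<Sum>t\<in>T. a t \<bullet> x t) \<partial>Q)"
begin

lemma measurable_P_Q:
  assumes "f \<in> borel_measurable (Pi\<^sub>M T (\<lambda>_. borel))"
  shows "f \<in> borel_measurable P" "f \<in> borel_measurable Q"
  using assms measurable_cong_sets[OF sets_P refl] measurable_cong_sets[OF sets_Q refl] by blast+

lemma integral_eq_limit:
  fixes f :: "nat \<Rightarrow> ('i \<Rightarrow> real^'n) \<Rightarrow> 'b::{banach, second_countable_topology}"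
  assumes eq: "\<And>k. (\<integral>x. f k x \<partial>P) = (\<integral>x. f k x \<partial>Q)"
    and meas: "\<And>k. f k \<in> borel_measurable (Pi\<^sub>M T (\<lambda>_. borel))"
    and bound: "\<And>k x. norm (f k x) \<le> B" and lim: "\<And>x. (\<lambda>k. f k x) \<longlonglongrightarrow> g x"
  shows "(\<integral>x. g x \<partial>P) = (\<integral>x. g x \<partial>Q)"
proof -
  have "(\<lambda>k. \<integral>x. f k x \<partial>M) \<longlonglongrightarrow> (\<integral>x. g x \<partial>M)"
    if M: "prob_space M" "\<And>k. f k \<in> borel_measurable M" for M
  proof (rule integral_dominated_convergence[where w="\<lambda>_. B"])
    show "g \<in> borel_measurable M" by (rule borel_measurable_LIMSEQ_metric[OF M(2) lim])
    show "integrable M (\<lambda>_. B)"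
      using M(1) by (simp add: prob_space.finite_measure finite_measure.integrable_const)
  qed (use M lim bound in auto)
  from this[OF prob_space_P measurable_P_Q(1)[OF meas]] this[OF prob_space_Q measurable_P_Q(2)[OF meas]]
  show ?thesis unfolding eq by (rule LIMSEQ_unique)
qed

lemma integral_eq_trig_poly:
  assumes "f \<in> trig_polys (linear_forms T)"
  shows "(\<integral>x. f x \<partial>P) = (\<integral>x. f x \<partial>Q)"
proof (rule integral_trig_polys_eqI[OF _ _ _ _ _ assms])
  show "finite_measure P" "finite_measure Q"
    using prob_space_P prob_space_Q by (simp_all add: prob_space.finite_measure)
  show "linear_forms T \<subseteq> borel_measurable P" "linear_forms T \<subseteq> borel_measurable Q"
    using linear_forms_measurable measurable_P_Q by blast+
  show "(\<integral>x. cis (\<xi> x) \<partial>P) = (\<integral>x. cis (\<xi> x) \<partial>Q)" if "\<xi> \<in> linear_forms T" for \<xi>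
    using that char_eq by (auto simp: linear_forms_def)
qed

lemma integral_eq_prod_circle:
  fixes \<phi> :: "'i \<times> 'n \<Rightarrow> complex \<Rightarrow> real"
  assumes cont: "\<And>i. continuous_on (sphere 0 1) (\<phi> i)"
  shows "(\<integral>x. (\<Prod>i\<in>T \<times> UNIV. \<phi> i (cis (\<kappa> * coord x i))) \<partial>P) =
    (\<integral>x. (\<Prod>i\<in>T \<times> UNIV. \<phi> i (cis (\<kappa> * coord x i))) \<partial>Q)"
proof -
  let ?I = "T \<times> (UNIV :: 'n set)"
  have "\<exists>f B. (\<forall>k. f k \<in> trig_polys (range (*))) \<and> (\<forall>k y. cmod (f k y) \<le> B) \<and>
      (\<forall>y. (\<lambda>k. f k y) \<longlonglongrightarrow> complex_of_real (\<phi> i (cis y)))" for i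
    by (rule trig_polys_LIMSEQ_circle[OF cont[of i]]) blast
  then obtain f :: "'i \<times> 'n \<Rightarrow> nat \<Rightarrow> real \<Rightarrow> complex" and B
    where f: "\<And>i k. f i k \<in> trig_polys (range (*))" "\<And>i k y. cmod (f i k y) \<le> B i"
      "\<And>i y. (\<lambda>k. f i k y) \<longlonglongrightarrow> complex_of_real (\<phi> i (cis y))"
    by metis
  define F where "F k x = (\<Prod>i\<in>?I. f i k (\<kappa> * coord x i))" for k x
  have F_trig: "F k \<in> trig_polys (linear_forms T)" for k
    unfolding F_def
  proof (intro trig_polys_prod zero_in_linear_forms linear_forms_add)
    fix i assume "i \<in> ?I"
    then have "(\<lambda>x. w * (\<kappa> * coord x i)) \<in> linear_forms T" for w
      using coord_in_linear_forms[OF finite_T, of i "w * \<kappa>"] by (simp add: mult.assoc)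
    then show "(\<lambda>x. f i k (\<kappa> * coord x i)) \<in> trig_polys (linear_forms T)"
      by (intro trig_polys_compose[OF f(1)]) auto
  qed (use finite_T in auto)
  have "(\<integral>x. complex_of_real (\<Prod>i\<in>?I. \<phi> i (cis (\<kappa> * coord x i))) \<partial>P) =
      (\<integral>x. complex_of_real (\<Prod>i\<in>?I. \<phi> i (cis (\<kappa> * coord x i))) \<partial>Q)"
  proof (rule integral_eq_limit[where f=F and B="\<Prod>i\<in>?I. B i"])
    show "(\<integral>x. F k x \<partial>P) = (\<integral>x. F k x \<partial>Q)" for k
      by (rule integral_eq_trig_poly[OF F_trig])
    show "F k \<in> borel_measurable (Pi\<^sub>M T (\<lambda>_. borel))" for k
      by (rule trig_polys_measurable[OF F_trig linear_forms_measurable])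
    show "cmod (F k x) \<le> (\<Prod>i\<in>?I. B i)" for k x
      unfolding F_def prod_norm[symmetric] by (intro prod_mono) (simp add: f(2))
    show "(\<lambda>k. F k x) \<longlonglongrightarrow> of_real (\<Prod>i\<in>?I. \<phi> i (cis (\<kappa> * coord x i)))" for x
      unfolding F_def of_real_prod by (intro tendsto_prod f(3))
  qed
  then show ?thesis by (simp only: integral_complex_of_real of_real_eq_iff)
qed

lemma integral_eq_prod_open_indicator:
  fixes U :: "'i \<times> 'n \<Rightarrow> complex set"
  assumes "\<And>i. open (U i)"
  shows "(\<integral>x. (\<Prod>i\<in>T \<times> UNIV. indicator (U i) (cis (\<kappa> * coord x i)) :: real) \<partial>P) =
    (\<integral>x. (\<Prod>i\<in>T \<times> UNIV. indicator (U i) (cis (\<kappa> * coord x i)) :: real) \<partial>Q)"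
proof -
  have "\<exists>\<phi>. (\<forall>k. continuous_on UNIV (\<phi> k)) \<and> (\<forall>k z. 0 \<le> \<phi> k z \<and> \<phi> k z \<le> 1) \<and>
      (\<forall>z. (\<lambda>k. \<phi> k z) \<longlonglongrightarrow> (indicator (U i) z :: real))" for i
    by (rule indicator_open_LIMSEQ[OF assms[of i]]) blast
  then obtain \<phi> :: "'i \<times> 'n \<Rightarrow> nat \<Rightarrow> complex \<Rightarrow> real"
    where \<phi>: "\<And>i k. continuous_on UNIV (\<phi> i k)" "\<And>i k z. 0 \<le> \<phi> i k z \<and> \<phi> i k z \<le> 1"
    "\<And>i z. (\<lambda>k. \<phi> i k z) \<longlonglongrightarrow> indicator (U i) z"
    by metis
  show ?thesis
  proof (rule integral_eq_limit[where f="\<lambda>k x. \<Prod>i\<in>T \<times> UNIV. \<phi> i k (cis (\<kappa> * coord x i))" and B=1])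
    show "(\<integral>x. (\<Prod>i\<in>T \<times> UNIV. \<phi> i k (cis (\<kappa> * coord x i))) \<partial>P) =
        (\<integral>x. (\<Prod>i\<in>T \<times> UNIV. \<phi> i k (cis (\<kappa> * coord x i))) \<partial>Q)" for k
      using continuous_on_subset[OF \<phi>(1) subset_UNIV] by (rule integral_eq_prod_circle)
    have "(\<lambda>y. \<phi> i k (cis (\<kappa> * y))) \<in> borel_measurable borel" for i k
      by (intro borel_measurable_continuous_onI continuous_on_compose2[OF \<phi>(1)] continuous_intros) auto
    then show "(\<lambda>x. \<Prod>i\<in>T \<times> UNIV. \<phi> i k (cis (\<kappa> * coord x i))) \<in> borel_measurable (Pi\<^sub>M T (\<lambda>_. borel))" for k
      by (rule borel_measurable_prod_coord[OF finite_T])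
    show "norm (\<Prod>i\<in>T \<times> UNIV. \<phi> i k (cis (\<kappa> * coord x i))) \<le> 1" for k x
      unfolding real_norm_def abs_prod using \<phi>(2) by (intro prod_le_1) (simp add: abs_le_iff)
    show "(\<lambda>k. \<Prod>i\<in>T \<times> UNIV. \<phi> i k (cis (\<kappa> * coord x i))) \<longlonglongrightarrow>
        (\<Prod>i\<in>T \<times> UNIV. indicator (U i) (cis (\<kappa> * coord x i)))" for x
      by (intro tendsto_prod \<phi>(3))
  qed
qed

lemma integral_eq_prod_indicator:
  fixes A :: "'i \<times> 'n \<Rightarrow> real set"
  assumes "\<And>i. open (A i)"
  shows "(\<integral>x. (\<Prod>i\<in>T \<times> UNIV. indicator (A i) (coord x i) :: real) \<partial>P) =
    (\<integral>x. (\<Prod>i\<in>T \<times> UNIV. indicator (A i) (coord x i) :: real) \<partial>Q)"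
proof -
  define f where "f k x = (\<Prod>i\<in>T \<times> UNIV. indicator (circle_code (Suc k) (A i)) (cis (pi / Suc k * coord x i)) :: real)"
    for k x
  show ?thesis
  proof (rule integral_eq_limit[where f=f and B=1])
    show "(\<integral>x. f k x \<partial>P) = (\<integral>x. f k x \<partial>Q)" for k
      unfolding f_def using assms by (intro integral_eq_prod_open_indicator open_circle_code)
    have "(\<lambda>y. indicator (circle_code (Suc k) (A i)) (cis (pi / Suc k * y)) :: real) \<in> borel_measurable borel" for k i
    proof -
      have "(\<lambda>y. cis (pi / Suc k * y)) \<in> borel_measurable borel"
        by (intro borel_measurable_continuous_onI continuous_intros)
      moreover have "indicator (circle_code (Suc k) (A i)) \<in> borel_measurable (borel :: complex measure)"
        using assms by (intro borel_measurable_indicator borel_open open_circle_code)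
      ultimately show ?thesis by (rule measurable_compose)
    qed
    then show "f k \<in> borel_measurable (Pi\<^sub>M T (\<lambda>_. borel))" for k
      unfolding f_def by (rule borel_measurable_prod_coord[OF finite_T])
    show "norm (f k x) \<le> 1" for k x
      unfolding f_def real_norm_def abs_prod by (intro prod_le_1) auto
    show "(\<lambda>k. f k x) \<longlonglongrightarrow> (\<Prod>i\<in>T \<times> UNIV. indicator (A i) (coord x i))" for x
    proof (rule tendsto_eventually)
      have "\<forall>\<^sub>F k in sequentially. \<forall>i\<in>T \<times> UNIV. \<bar>coord x i\<bar> < Suc k"
      proof (intro eventually_ball_finite ballI)
        show "finite (T \<times> (UNIV :: 'n set))" using finite_T by simp
        fix i
        obtain N :: nat where "\<bar>coord x i\<bar> \<le> N" using real_arch_simple by blast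
        then show "\<forall>\<^sub>F k in sequentially. \<bar>coord x i\<bar> < Suc k"
          unfolding eventually_sequentially by (intro exI[of _ N]) auto
      qed
      then show "\<forall>\<^sub>F k in sequentially. f k x = (\<Prod>i\<in>T \<times> UNIV. indicator (A i) (coord x i))"
      proof eventually_elim
        case (elim k)
        then show ?case
          unfolding f_def by (intro prod.cong refl indicator_circle_code) auto
      qed
    qed
  qed
qed

lemma measure_eq: "P = Q"
proof (rule PiM_eqI_boxes[OF finite_T prob_space.finite_measure[OF prob_space_P] sets_P sets_Q])
  fix a b :: "'i \<Rightarrow> real^'n"
  let ?X = "\<Pi>\<^sub>E t\<in>T. box (a t) (b t)"
  have "measure M ?X = (\<integral>x. (\<Prod>i\<in>T \<times> UNIV. indicator {coord a i<..<coord b i} (coord x i)) \<partial>M)"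
    if "sets M = sets (Pi\<^sub>M T (\<lambda>_. borel))" for M
  proof -
    have space: "space M = (\<Pi>\<^sub>E t\<in>T. UNIV)"
      using sets_eq_imp_space_eq[OF that] by (simp add: space_PiM)
    have "?X \<subseteq> space M" unfolding space by (rule PiE_mono) simp
    then have "measure M ?X = (\<integral>x. indicator ?X x \<partial>M)"
      by (simp add: Int_absorb2)
    also have "\<dots> = (\<integral>x. (\<Prod>i\<in>T \<times> UNIV. indicator {coord a i<..<coord b i} (coord x i)) \<partial>M)"
      using finite_T space by (intro Bochner_Integration.integral_cong refl indicator_PiE_box_coord) auto
    finally show ?thesis .
  qed
  then have "measure P ?X = measure Q ?X"
    using sets_P sets_Q integral_eq_prod_indicator[of "\<lambda>i. {coord a i<..<coord b i}"] by simp
  then show "emeasure P ?X = emeasure Q ?X"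
    using prob_space_P prob_space_Q
    by (simp add: prob_space.finite_measure finite_measure.emeasure_eq_measure)
qed

end

lemma integral_cis_distr_restrict:
  fixes W :: "'i \<Rightarrow> 'w \<Rightarrow> real^'n"
  assumes T: "finite T" and W: "\<And>t. W t \<in> borel_measurable M"
  shows "(\<integral>x. cis (\<Sum>t\<in>T. a t \<bullet> x t) \<partial>distr M (Pi\<^sub>M T (\<lambda>_. borel)) (\<lambda>\<omega>. \<lambda>t\<in>T. W t \<omega>)) =
    (\<integral>y. cis y \<partial>distr M borel (\<lambda>\<omega>. \<Sum>t\<in>T. a t \<bullet> W t \<omega>))"
proof -
  have W_T: "(\<lambda>\<omega>. \<lambda>t\<in>T. W t \<omega>) \<in> measurable M (Pi\<^sub>M T (\<lambda>_. borel))"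
    using W by (intro measurable_restrict) auto
  have lin: "(\<lambda>\<omega>. \<Sum>t\<in>T. a t \<bullet> W t \<omega>) \<in> borel_measurable M"
    using W by (intro borel_measurable_sum borel_measurable_inner) auto
  have cis: "cis \<in> borel_measurable borel"
    by (intro borel_measurable_continuous_onI continuous_intros)
  have "(\<lambda>x. \<Sum>t\<in>T. a t \<bullet> x t) \<in> borel_measurable (Pi\<^sub>M T (\<lambda>_. borel))"
    using linear_forms_measurable[of T] unfolding linear_forms_def by blast
  from measurable_compose[OF this cis]
  have "(\<integral>x. cis (\<Sum>t\<in>T. a t \<bullet> x t) \<partial>distr M (Pi\<^sub>M T (\<lambda>_. borel)) (\<lambda>\<omega>. \<lambda>t\<in>T. W t \<omega>)) =
      (\<integral>\<omega>. cis (\<Sum>t\<in>T. a t \<bullet> W t \<omega>) \<partial>M)"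
    using T by (simp add: integral_distr[OF W_T] cong: sum.cong)
  also have "\<dots> = (\<integral>y. cis y \<partial>distr M borel (\<lambda>\<omega>. \<Sum>t\<in>T. a t \<bullet> W t \<omega>))"
    by (rule integral_distr[OF lin cis, symmetric])
  finally show ?thesis .
qed

theorem eq_lawI_linear_combinations:
  fixes U V :: "'i \<Rightarrow> 'w \<Rightarrow> real^'n"
  assumes M: "prob_space M"
    and U: "\<And>t. U t \<in> borel_measurable M" and V: "\<And>t. V t \<in> borel_measurable M"
    and distr_eq: "\<And>T a. finite T \<Longrightarrow>
      distr M borel (\<lambda>\<omega>. \<Sum>t\<in>T. a t \<bullet> U t \<omega>) = distr M borel (\<lambda>\<omega>. \<Sum>t\<in>T. a t \<bullet> V t \<omega>)"
  shows "eq_law M U V"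
  unfolding eq_law_def
proof (intro allI impI)
  fix T :: "'i set" assume T: "finite T"
  let ?P = "distr M (Pi\<^sub>M T (\<lambda>_. borel)) (\<lambda>\<omega>. \<lambda>t\<in>T. U t \<omega>)"
  let ?Q = "distr M (Pi\<^sub>M T (\<lambda>_. borel)) (\<lambda>\<omega>. \<lambda>t\<in>T. V t \<omega>)"
  have "prob_space ?P" "prob_space ?Q"
    using U V by (auto intro!: prob_space.prob_space_distr[OF M] measurable_restrict)
  moreover have "(\<integral>x. cis (\<Sum>t\<in>T. a t \<bullet> x t) \<partial>?P) = (\<integral>x. cis (\<Sum>t\<in>T. a t \<bullet> x t) \<partial>?Q)" for a
    unfolding integral_cis_distr_restrict[OF T U] integral_cis_distr_restrict[OF T V] distr_eq[OF T] ..
  ultimately have "same_char_fun T ?P ?Q"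
    using T by (simp add: same_char_fun_def)
  then show "?P = ?Q" by (rule same_char_fun.measure_eq)
qed

section \<open>Gaussian families and their cross-covariances\<close>

definition gauss_law :: "real \<Rightarrow> real measure" where
  "gauss_law \<sigma> = (if \<sigma> = 0 then return borel 0 else density lborel (normal_density 0 \<sigma>))"

lemma gauss_law_second_moment:
  assumes "\<sigma> \<ge> 0"
  shows "(\<integral>y. y\<^sup>2 \<partial>gauss_law \<sigma>) = \<sigma>\<^sup>2"
proof (cases "\<sigma> = 0")
  case True
  then show ?thesis by (simp add: gauss_law_def integral_return)
next
  case False
  with assms have "\<sigma> > 0" by simp
  have "(\<integral>y. y\<^sup>2 \<partial>gauss_law \<sigma>) = (\<integral>y. normal_density 0 \<sigma> y * (y - 0) ^ (2 * 1) \<partial>lborel)"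
    using False by (simp add: gauss_law_def integral_density)
  also have "\<dots> = \<sigma>\<^sup>2"
    using integral_normal_moment_even[OF \<open>\<sigma> > 0\<close>, of 0 1] \<open>\<sigma> > 0\<close> by simp
  finally show ?thesis .
qed

definition centered_gaussian_family :: "'w measure \<Rightarrow> ('i \<Rightarrow> 'w \<Rightarrow> real^'n) \<Rightarrow> bool" where
  "centered_gaussian_family M X \<longleftrightarrow> (\<forall>t. X t \<in> borel_measurable M) \<and>
     (\<forall>T a. finite T \<longrightarrow> (\<exists>\<sigma>\<ge>0. distr M borel (\<lambda>\<omega>. \<Sum>t\<in>T. a t \<bullet> X t \<omega>) = gauss_law \<sigma>))"

lemma centered_gaussian_field_eq_family: "centered_gaussian_field M X = centered_gaussian_family M X"
  unfolding centered_gaussian_field_def centered_gaussian_family_def gauss_law_def ..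

definition cross_integrable :: "'w measure \<Rightarrow> ('i \<Rightarrow> 'w \<Rightarrow> real^'n) \<Rightarrow> bool" where
  "cross_integrable M X \<longleftrightarrow> (\<forall>s t j k. integrable M (\<lambda>\<omega>. X s \<omega> $ j * X t \<omega> $ k))"

text \<open>Second moments E[X(s) X(t)^T]; for a centred family these are the cross-covariances.\<close>

definition cross_cov :: "'w measure \<Rightarrow> ('i \<Rightarrow> 'w \<Rightarrow> real^'n) \<Rightarrow> 'i \<Rightarrow> 'i \<Rightarrow> real^'n^'n" where
  "cross_cov M X s t = (\<chi> j k. \<integral>\<omega>. X s \<omega> $ j * X t \<omega> $ k \<partial>M)"

lemma transpose_cross_cov: "transpose (cross_cov M X s t) = cross_cov M X t s"
  by (simp add: cross_cov_def transpose_def mult.commute)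

lemma second_moment_linear_comb:
  assumes "cross_integrable M X"
  shows "(\<integral>\<omega>. (\<Sum>t\<in>T. b t \<bullet> X t \<omega>)\<^sup>2 \<partial>M) = (\<Sum>s\<in>T. \<Sum>t\<in>T. b s \<bullet> (cross_cov M X s t *v b t))"
proof -
  have "(\<Sum>t\<in>T. b t \<bullet> X t \<omega>)\<^sup>2 = (\<Sum>s\<in>T. \<Sum>t\<in>T. \<Sum>j\<in>UNIV. \<Sum>k\<in>UNIV. b s $ j * b t $ k * (X s \<omega> $ j * X t \<omega> $ k))"
    for \<omega>
    by (simp add: power2_eq_square sum_product inner_vec_def algebra_simps)
  then have "(\<integral>\<omega>. (\<Sum>t\<in>T. b t \<bullet> X t \<omega>)\<^sup>2 \<partial>M) =
      (\<Sum>s\<in>T. \<Sum>t\<in>T. \<Sum>j\<in>UNIV. \<Sum>k\<in>UNIV. b s $ j * b t $ k * (\<integral>\<omega>. X s \<omega> $ j * X t \<omega> $ k \<partial>M))"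
    using assms by (simp add: cross_integrable_def integrable_sum)
  also have "\<dots> = (\<Sum>s\<in>T. \<Sum>t\<in>T. b s \<bullet> (cross_cov M X s t *v b t))"
    by (intro sum.cong refl)
      (simp add: cross_cov_def inner_vec_def matrix_vector_mult_def sum_distrib_left algebra_simps)
  finally show ?thesis .
qed

lemma eq_law_gaussian_if_cross_cov_eq:
  fixes M :: "'w measure" and U V :: "'i \<Rightarrow> 'w \<Rightarrow> real^'n"
  assumes M: "prob_space M"
    and U: "centered_gaussian_family M U" "cross_integrable M U"
    and V: "centered_gaussian_family M V" "cross_integrable M V"
    and cov: "\<And>s t. cross_cov M U s t = cross_cov M V s t"
  shows "eq_law M U V"
proof (rule eq_lawI_linear_combinations[OF M])
  show "\<And>t. U t \<in> borel_measurable M" "\<And>t. V t \<in> borel_measurable M"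
    using U(1) V(1) by (simp_all add: centered_gaussian_family_def)
  fix T :: "'i set" and a assume "finite T"
  have second_moment: "(\<integral>y. y\<^sup>2 \<partial>distr M borel (\<lambda>\<omega>. \<Sum>t\<in>T. a t \<bullet> W t \<omega>)) =
      (\<Sum>s\<in>T. \<Sum>t\<in>T. a s \<bullet> (cross_cov M W s t *v a t))"
    if "centered_gaussian_family M W" "cross_integrable M W" for W :: "'i \<Rightarrow> 'w \<Rightarrow> real^'n"
  proof -
    have "(\<lambda>\<omega>. \<Sum>t\<in>T. a t \<bullet> W t \<omega>) \<in> borel_measurable M"
      using that(1) unfolding centered_gaussian_family_def
      by (intro borel_measurable_sum borel_measurable_inner) auto
    then show ?thesis
      by (simp add: integral_distr second_moment_linear_comb[OF that(2)])
  qed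
  obtain \<sigma> where \<sigma>: "\<sigma> \<ge> 0" "distr M borel (\<lambda>\<omega>. \<Sum>t\<in>T. a t \<bullet> U t \<omega>) = gauss_law \<sigma>"
    using U(1) \<open>finite T\<close> unfolding centered_gaussian_family_def by blast
  obtain \<tau> where \<tau>: "\<tau> \<ge> 0" "distr M borel (\<lambda>\<omega>. \<Sum>t\<in>T. a t \<bullet> V t \<omega>) = gauss_law \<tau>"
    using V(1) \<open>finite T\<close> unfolding centered_gaussian_family_def by blast
  have "\<sigma>\<^sup>2 = \<tau>\<^sup>2"
    using second_moment[OF U] second_moment[OF V] gauss_law_second_moment \<sigma> \<tau> cov by simp
  with \<sigma> \<tau> show "distr M borel (\<lambda>\<omega>. \<Sum>t\<in>T. a t \<bullet> U t \<omega>) = distr M borel (\<lambda>\<omega>. \<Sum>t\<in>T. a t \<bullet> V t \<omega>)"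
    by (simp add: power2_eq_iff_nonneg)
qed

lemma cross_cov_eq_if_eq_law:
  fixes M :: "'w measure" and U V :: "'i \<Rightarrow> 'w \<Rightarrow> real^'n"
  assumes "eq_law M U V" "\<And>t. U t \<in> borel_measurable M" "\<And>t. V t \<in> borel_measurable M"
  shows "cross_cov M U s t = cross_cov M V s t"
proof -
  let ?T = "{s, t}"
  have prod_meas: "(\<lambda>x. x s $ j * x t $ k) \<in> borel_measurable (Pi\<^sub>M ?T (\<lambda>_. borel :: (real^'n) measure))" for j k
    using borel_measurable_coord[of "(s, j)" ?T] borel_measurable_coord[of "(t, k)" ?T]
    by (simp add: coord_def)
  have "(\<integral>\<omega>. W s \<omega> $ j * W t \<omega> $ k \<partial>M) =
      (\<integral>x. x s $ j * x t $ k \<partial>distr M (Pi\<^sub>M ?T (\<lambda>_. borel)) (\<lambda>\<omega>. \<lambda>u\<in>?T. W u \<omega>))"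
    if "\<And>t. W t \<in> borel_measurable M" for W :: "'i \<Rightarrow> 'w \<Rightarrow> real^'n" and j k
    using that by (subst integral_distr[OF measurable_restrict prod_meas]) auto
  then show ?thesis
    using assms unfolding eq_law_def cross_cov_def by (simp add: vec_eq_iff)
qed

lemma centered_gaussian_family_reindex:
  fixes X :: "'i \<Rightarrow> 'w \<Rightarrow> real^'n" and f :: "'j \<Rightarrow> 'i"
  assumes "centered_gaussian_family M X"
  shows "centered_gaussian_family M (\<lambda>t. X (f t))"
  unfolding centered_gaussian_family_def
proof (intro conjI allI impI)
  show "X (f t) \<in> borel_measurable M" for t
    using assms by (simp add: centered_gaussian_family_def)
  fix T :: "'j set" and a assume "finite T"
  have "(\<Sum>t\<in>T. a t \<bullet> X (f t) \<omega>) = (\<Sum>u\<in>f ` T. (\<Sum>t\<in>{t\<in>T. f t = u}. a t) \<bullet> X u \<omega>)" for \<omega>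
    using sum.group[OF \<open>finite T\<close> finite_imageI[OF \<open>finite T\<close>], where g=f and h="\<lambda>t. a t \<bullet> X (f t) \<omega>"]
    by (simp add: inner_sum_left)
  then show "\<exists>\<sigma>\<ge>0. distr M borel (\<lambda>\<omega>. \<Sum>t\<in>T. a t \<bullet> X (f t) \<omega>) = gauss_law \<sigma>"
    using assms \<open>finite T\<close> by (simp add: centered_gaussian_family_def)
qed

lemma centered_gaussian_family_linear:
  fixes X :: "'i \<Rightarrow> 'w \<Rightarrow> real^'n"
  assumes "centered_gaussian_family M X"
  shows "centered_gaussian_family M (\<lambda>t \<omega>. B *v X t \<omega>)"
  unfolding centered_gaussian_family_def
proof (intro conjI allI impI)
  have "(\<lambda>v. B *v v) \<in> borel_measurable borel"
    by (intro borel_measurable_continuous_onI linear_continuous_on matrix_vector_mul_bounded_linear)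
  moreover have "X t \<in> borel_measurable M" for t
    using assms by (simp add: centered_gaussian_family_def)
  ultimately show "(\<lambda>\<omega>. B *v X t \<omega>) \<in> borel_measurable M" for t
    using measurable_compose by blast
  fix T :: "'i set" and a assume "finite T"
  have "(\<Sum>t\<in>T. a t \<bullet> (B *v X t \<omega>)) = (\<Sum>t\<in>T. (transpose B *v a t) \<bullet> X t \<omega>)" for \<omega>
    by (simp add: transpose_matrix_vector dot_lmul_matrix)
  then show "\<exists>\<sigma>\<ge>0. distr M borel (\<lambda>\<omega>. \<Sum>t\<in>T. a t \<bullet> (B *v X t \<omega>)) = gauss_law \<sigma>"
    using assms \<open>finite T\<close> by (simp add: centered_gaussian_family_def)
qed

lemma cross_cov_linear:
  assumes "cross_integrable M X"
  shows "cross_integrable M (\<lambda>t \<omega>. B *v X t \<omega>)"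
    and "cross_cov M (\<lambda>t \<omega>. B *v X t \<omega>) s t = B ** cross_cov M X s t ** transpose B"
proof -
  have expand: "(B *v X s \<omega>) $ j * (B *v X t \<omega>) $ k =
      (\<Sum>l\<in>UNIV. \<Sum>m\<in>UNIV. B $ j $ l * B $ k $ m * (X s \<omega> $ l * X t \<omega> $ m))" for s t j k \<omega>
    by (simp add: matrix_vector_mult_def sum_product algebra_simps)
  show "cross_integrable M (\<lambda>t \<omega>. B *v X t \<omega>)"
    using assms unfolding cross_integrable_def expand by (simp add: integrable_sum)
  have "(\<integral>\<omega>. (B *v X s \<omega>) $ j * (B *v X t \<omega>) $ k \<partial>M) = (B ** cross_cov M X s t ** transpose B) $ j $ k" for j k
  proof -
    have "(\<integral>\<omega>. (B *v X s \<omega>) $ j * (B *v X t \<omega>) $ k \<partial>M) =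
        (\<Sum>l\<in>UNIV. \<Sum>m\<in>UNIV. B $ j $ l * B $ k $ m * (\<integral>\<omega>. X s \<omega> $ l * X t \<omega> $ m \<partial>M))"
      using assms unfolding cross_integrable_def expand by (simp add: integrable_sum)
    also have "\<dots> = (B ** cross_cov M X s t ** transpose B) $ j $ k"
      by (simp add: cross_cov_def matrix_matrix_mult_def transpose_def sum_distrib_left
          sum_distrib_right algebra_simps) (rule sum.swap)
    finally show ?thesis .
  qed
  then show "cross_cov M (\<lambda>t \<omega>. B *v X t \<omega>) s t = B ** cross_cov M X s t ** transpose B"
    by (simp add: cross_cov_def vec_eq_iff)
qed

lemma spectral_rep_cross_cov_neg:
  assumes "spectral_rep M X \<mu> g"
  shows "cross_cov M X (-s) (-t) = cross_cov M X t s"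
proof -
  have rep: "\<And>s t j k. complex_of_real (\<integral>\<omega>. X s \<omega> $ j * X t \<omega> $ k \<partial>M) =
      (\<integral>x. spec_kernel s t x * g x $ j $ k \<partial>\<mu>)"
    and herm: "\<And>x. herm_psd (g x)"
    using assms unfolding spectral_rep_def by auto
  have g_cnj: "cnj (g x $ j $ k) = g x $ k $ j" for x j k
    using herm[of x] unfolding herm_psd_def by (metis complex_cnj_cnj)
  have kernel_cnj: "cnj (spec_kernel a b x) = spec_kernel (-a) (-b) x" for a b x
    by (simp add: spec_kernel_def cis_cnj inner_minus_left)
  have "(\<integral>\<omega>. X t \<omega> $ k * X s \<omega> $ j \<partial>M) = (\<integral>\<omega>. X (-t) \<omega> $ j * X (-s) \<omega> $ k \<partial>M)" for j k
  proof -
    have "complex_of_real (\<integral>\<omega>. X t \<omega> $ k * X s \<omega> $ j \<partial>M) = cnj (\<integral>x. spec_kernel t s x * g x $ k $ j \<partial>\<mu>)"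
      by (simp only: rep[symmetric] complex_cnj_complex_of_real)
    also have "\<dots> = (\<integral>x. cnj (spec_kernel t s x * g x $ k $ j) \<partial>\<mu>)"
      by (simp only: Bochner_Integration.integral_cnj)
    also have "\<dots> = (\<integral>x. spec_kernel (-t) (-s) x * g x $ j $ k \<partial>\<mu>)"
      by (simp only: complex_cnj_mult kernel_cnj g_cnj)
    also have "\<dots> = complex_of_real (\<integral>\<omega>. X (-t) \<omega> $ j * X (-s) \<omega> $ k \<partial>M)"
      by (simp only: rep)
    finally show ?thesis by (simp only: of_real_eq_iff)
  qed
  then show ?thesis
    by (simp add: cross_cov_def vec_eq_iff mult.commute)
qed

lemma uminus_matrix_vector_mult: "(- A :: real^'n^'m) *v x = - (A *v x)"
  by (simp add: matrix_vector_mult_def vec_eq_iff sum_negf)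

lemma uminus_matrix_matrix_mult: "(- A :: real^'n^'m) ** B = - (A ** B)"
  by (simp add: matrix_matrix_mult_def vec_eq_iff sum_negf)

lemma invertible_neg_mat_one: "invertible (- mat 1 :: real^'n^'n)"
  unfolding invertible_def
  by (rule exI[of _ "- mat 1"]) (simp add: uminus_matrix_matrix_mult matrix_mul_rid)

lemma spectral_rep_cross_integrable: "spectral_rep M X \<mu> g \<Longrightarrow> cross_integrable M X"
  by (simp add: spectral_rep_def cross_integrable_def)

lemma neg_mat_one_in_Gdom_iff:
  fixes X :: "real^'m \<Rightarrow> 'w \<Rightarrow> real^'n"
  assumes M: "prob_space M" and gauss: "centered_gaussian_family M X"
    and spectral: "spectral_rep M X \<mu> g"
  shows "- mat 1 \<in> Gdom M X \<longleftrightarrow> (\<forall>s t. transpose (cross_cov M X s t) = cross_cov M X s t)"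
proof -
  have int: "cross_integrable M X"
    by (rule spectral_rep_cross_integrable[OF spectral])
  have meas: "\<And>t. X t \<in> borel_measurable M"
    using gauss by (simp add: centered_gaussian_family_def)
  have "- mat 1 \<in> Gdom M X \<longleftrightarrow> eq_law M (\<lambda>t. X (- t)) X"
    by (simp add: Gdom_def invertible_neg_mat_one uminus_matrix_vector_mult)
  also have "\<dots> \<longleftrightarrow> (\<forall>s t. cross_cov M X (- s) (- t) = cross_cov M X s t)"
  proof
    assume "eq_law M (\<lambda>t. X (- t)) X"
    from cross_cov_eq_if_eq_law[OF this] meas show "\<forall>s t. cross_cov M X (- s) (- t) = cross_cov M X s t"
      by (simp add: cross_cov_def)
  next
    assume "\<forall>s t. cross_cov M X (- s) (- t) = cross_cov M X s t"
    moreover have "cross_integrable M (\<lambda>t. X (- t))"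
      using int by (simp add: cross_integrable_def)
    ultimately show "eq_law M (\<lambda>t. X (- t)) X"
      by (intro eq_law_gaussian_if_cross_cov_eq[OF M centered_gaussian_family_reindex[OF gauss] _ gauss int])
        (simp_all add: cross_cov_def)
  qed
  also have "\<dots> \<longleftrightarrow> (\<forall>s t. transpose (cross_cov M X s t) = cross_cov M X s t)"
    using spectral_rep_cross_cov_neg[OF spectral] transpose_cross_cov by metis
  finally show ?thesis .
qed

definition congruence_stabilizer :: "(real^'n^'n) set \<Rightarrow> (real^'n^'n) set" where
  "congruence_stabilizer \<C> = {B. invertible B \<and> (\<forall>C\<in>\<C>. B ** C ** transpose B = C)}"

lemma Gran_eq_congruence_stabilizer:
  fixes X :: "real^'m \<Rightarrow> 'w \<Rightarrow> real^'n"
  assumes M: "prob_space M" and gauss: "centered_gaussian_family M X" and int: "cross_integrable M X"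
  shows "Gran M X = congruence_stabilizer {cross_cov M X s t | s t. True}"
proof -
  have meas: "\<And>t. X t \<in> borel_measurable M" "\<And>t. (\<lambda>\<omega>. B *v X t \<omega>) \<in> borel_measurable M" for B
    using gauss centered_gaussian_family_linear[OF gauss, of B]
    by (simp_all add: centered_gaussian_family_def)
  have "eq_law M (\<lambda>t \<omega>. B *v X t \<omega>) X \<longleftrightarrow> (\<forall>s t. B ** cross_cov M X s t ** transpose B = cross_cov M X s t)"
    for B
  proof
    assume "eq_law M (\<lambda>t \<omega>. B *v X t \<omega>) X"
    from cross_cov_eq_if_eq_law[OF this meas(2) meas(1)]
    show "\<forall>s t. B ** cross_cov M X s t ** transpose B = cross_cov M X s t"
      by (simp add: cross_cov_linear(2)[OF int])
  next
    assume "\<forall>s t. B ** cross_cov M X s t ** transpose B = cross_cov M X s t"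
    then show "eq_law M (\<lambda>t \<omega>. B *v X t \<omega>) X"
      by (intro eq_law_gaussian_if_cross_cov_eq[OF M centered_gaussian_family_linear[OF gauss]
          cross_cov_linear(1)[OF int] gauss int]) (simp add: cross_cov_linear(2)[OF int])
  qed
  then show ?thesis by (auto simp: Gran_def congruence_stabilizer_def)
qed

section \<open>Congruence stabilizers in dimension two\<close>

lemma matrix_inv_cancel:
  fixes A :: "real^'n^'n"
  assumes "invertible A"
  shows "A ** matrix_inv A = mat 1" "matrix_inv A ** A = mat 1"
proof -
  from assms have "\<exists>A'. A ** A' = mat 1 \<and> A' ** A = mat 1" by (simp add: invertible_def)
  then have "A ** matrix_inv A = mat 1 \<and> matrix_inv A ** A = mat 1"
    unfolding matrix_inv_def by (rule someI_ex)
  then show "A ** matrix_inv A = mat 1" "matrix_inv A ** A = mat 1" by auto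
qed

lemma sym_posdef_invertible:
  fixes W :: "real^'n^'n"
  assumes "sym_posdef W"
  shows "invertible W"
proof -
  have "inj ((*v) W)"
  proof (rule injI)
    fix x y assume "W *v x = W *v y"
    then have "(x - y) \<bullet> (W *v (x - y)) = 0" by (simp add: matrix_vector_mult_diff_distrib)
    then show "x = y" using assms unfolding sym_posdef_def by (metis eq_iff_diff_eq_0 less_irrefl)
  qed
  then show ?thesis
    using matrix_left_invertible_injective invertible_left_inverse by blast
qed

lemma transpose_matrix_inv_symmetric:
  fixes W :: "real^'n^'n"
  assumes "transpose W = W" "invertible W"
  shows "transpose (matrix_inv W) = matrix_inv W"
proof -
  note inv = matrix_inv_cancel[OF assms(2)]
  have left_inv: "transpose (matrix_inv W) ** W = mat 1"
    using inv(1) assms(1) by (metis matrix_transpose_mul transpose_mat)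
  have "transpose (matrix_inv W) = transpose (matrix_inv W) ** (W ** matrix_inv W)"
    by (simp add: inv matrix_mul_rid)
  also have "\<dots> = (transpose (matrix_inv W) ** W) ** matrix_inv W"
    by (simp only: matrix_mul_assoc)
  also have "\<dots> = matrix_inv W"
    by (simp add: left_inv matrix_mul_lid)
  finally show ?thesis .
qed

lemma conj_congruence_iff:
  fixes W A C :: "real^'n^'n"
  assumes "transpose W = W" "invertible W"
  defines "Y \<equiv> matrix_inv W ** C ** matrix_inv W"
  shows "C = W ** Y ** W"
    and "(W ** A ** matrix_inv W) ** C ** transpose (W ** A ** matrix_inv W) = C \<longleftrightarrow>
      A ** Y ** transpose A = Y"
    and "transpose C = C \<longleftrightarrow> transpose Y = Y"
proof -
  let ?V = "matrix_inv W"
  note inv = matrix_inv_cancel[OF assms(2)]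
  have tV: "transpose ?V = ?V" by (rule transpose_matrix_inv_symmetric[OF assms(1,2)])
  have "W ** Y ** W = (W ** ?V) ** C ** (?V ** W)"
    unfolding Y_def by (simp only: matrix_mul_assoc)
  then show C: "C = W ** Y ** W"
    by (simp add: inv matrix_mul_lid matrix_mul_rid)
  have cancel: "W ** Z ** W = W ** Z' ** W \<longleftrightarrow> Z = Z'" for Z Z'
  proof
    assume "W ** Z ** W = W ** Z' ** W"
    then have "?V ** (W ** Z ** W) ** ?V = ?V ** (W ** Z' ** W) ** ?V" by simp
    moreover have "?V ** (W ** U ** W) ** ?V = (?V ** W) ** U ** (W ** ?V)" for U
      by (simp only: matrix_mul_assoc)
    ultimately show "Z = Z'" by (simp add: inv matrix_mul_lid matrix_mul_rid)
  qed simp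
  have "(W ** A ** ?V) ** C ** transpose (W ** A ** ?V) = (W ** A ** ?V) ** (W ** Y ** W) ** (?V ** transpose A ** W)"
    using assms(1) tV by (subst C) (simp add: matrix_transpose_mul matrix_mul_assoc)
  also have "\<dots> = W ** A ** (?V ** W) ** Y ** (W ** ?V) ** transpose A ** W"
    by (simp only: matrix_mul_assoc)
  also have "\<dots> = W ** (A ** Y ** transpose A) ** W"
    by (simp add: inv matrix_mul_lid matrix_mul_rid matrix_mul_assoc)
  finally show "(W ** A ** ?V) ** C ** transpose (W ** A ** ?V) = C \<longleftrightarrow> A ** Y ** transpose A = Y"
    by (subst (2) C) (simp only: cancel)
  have "transpose (W ** Y ** W) = W ** transpose Y ** W"
    using assms(1) by (simp add: matrix_transpose_mul matrix_mul_assoc)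
  then show "transpose C = C \<longleftrightarrow> transpose Y = Y"
    by (subst (1 2) C) (simp only: cancel)
qed

lemma matrix_conj_inj:
  fixes W A B :: "real^'n^'n"
  assumes "invertible W" "W ** A ** matrix_inv W = W ** B ** matrix_inv W"
  shows "A = B"
proof -
  note inv = matrix_inv_cancel[OF assms(1)]
  have "matrix_inv W ** (W ** Z ** matrix_inv W) ** W = (matrix_inv W ** W) ** Z ** (matrix_inv W ** W)" for Z
    by (simp only: matrix_mul_assoc)
  with assms(2) show ?thesis by (metis inv(2) matrix_mul_lid matrix_mul_rid)
qed

definition rot90 :: "real^2^2" where
  "rot90 = (\<chi> i j. if i = j then 0 else if i = 1 then -1 else 1)"

lemma mat2_eq_iff:
  "(A :: real^2^2) = B \<longleftrightarrow> A$1$1 = B$1$1 \<and> A$1$2 = B$1$2 \<and> A$2$1 = B$2$1 \<and> A$2$2 = B$2$2"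
  by (auto simp: vec_eq_iff forall_2)

lemma mat2_mult_nth: "((A :: real^2^2) ** B) $ i $ j = A $ i $ 1 * B $ 1 $ j + A $ i $ 2 * B $ 2 $ j"
  by (simp add: matrix_matrix_mult_def sum_2)

lemma mat2_transpose_nth: "transpose (A :: real^2^2) $ i $ j = A $ j $ i"
  by (simp add: transpose_def)

lemma mat2_entries:
  "diag2 a b $ 1 $ 1 = a" "diag2 a b $ 1 $ 2 = 0" "diag2 a b $ 2 $ 1 = 0" "diag2 a b $ 2 $ 2 = b"
  "rot90 $ 1 $ 1 = 0" "rot90 $ 1 $ 2 = -1" "rot90 $ 2 $ 1 = 1" "rot90 $ 2 $ 2 = 0"
  "(mat 1 :: real^2^2) $ 1 $ 1 = 1" "(mat 1 :: real^2^2) $ 1 $ 2 = 0"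
  "(mat 1 :: real^2^2) $ 2 $ 1 = 0" "(mat 1 :: real^2^2) $ 2 $ 2 = 1"
  by (simp_all add: diag2_def rot90_def mat_def)

lemmas mat2_simps = mat2_eq_iff mat2_mult_nth mat2_transpose_nth mat2_entries

lemma reflection_in_D2_O2: "diag2 1 (-1) \<in> D2" "diag2 1 (-1) \<in> O2"
proof -
  show "diag2 1 (-1) \<in> D2" unfolding D2_def by blast
  have "transpose (diag2 1 (-1)) ** diag2 1 (-1) = mat 1"
    by (simp only: mat2_simps) simp
  then show "diag2 1 (-1) \<in> O2" by (simp add: O2_def)
qed

lemma det_reflection: "det (diag2 1 (-1)) = -1"
  by (simp add: det_2 mat2_entries)

lemma invertible_reflection: "invertible (diag2 1 (-1))"
proof -
  have "diag2 1 (-1) ** diag2 1 (-1) = mat 1"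
    by (simp only: mat2_simps) simp
  then show ?thesis unfolding invertible_def by blast
qed

lemma rot90_in_SO2: "rot90 \<in> SO2"
proof -
  have "transpose rot90 ** rot90 = mat 1"
    by (simp only: mat2_simps) simp
  then show ?thesis by (simp add: SO2_def det_2 mat2_entries)
qed

lemma reflection_congruent_iff:
  fixes Y :: "real^2^2"
  shows "diag2 1 (-1) ** Y ** transpose (diag2 1 (-1)) = Y \<longleftrightarrow> Y $ 1 $ 2 = 0 \<and> Y $ 2 $ 1 = 0"
  by (simp only: mat2_simps) auto

lemma off_diagonal_zero_if_rotation_congruent:
  fixes Y :: "real^2^2"
  assumes "transpose Y = Y" "rot90 ** Y ** transpose rot90 = Y"
  shows "Y $ 1 $ 2 = 0 \<and> Y $ 2 $ 1 = 0"
proof -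
  have "Y $ 2 $ 1 = Y $ 1 $ 2" using assms(1) by (metis mat2_transpose_nth)
  moreover have "(rot90 ** Y ** transpose rot90) $ 1 $ 2 = Y $ 1 $ 2" using assms(2) by simp
  then have "- Y $ 2 $ 1 = Y $ 1 $ 2" by (simp add: mat2_mult_nth mat2_transpose_nth mat2_entries)
  ultimately show ?thesis by simp
qed

lemma symmetric_if_stabilizer_conj_reflection:
  assumes "conj_to (congruence_stabilizer \<C>) S" "diag2 1 (-1) \<in> S" "C \<in> \<C>"
  shows "transpose C = C"
proof -
  from assms(1) obtain W where W: "sym_posdef W" "congruence_stabilizer \<C> = (\<lambda>Q. W ** Q ** matrix_inv W) ` S"
    by (auto simp: conj_to_def)
  have "transpose W = W" "invertible W"
    using W(1) sym_posdef_invertible by (auto simp: sym_posdef_def)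
  note conj = conj_congruence_iff[OF this, where C = C]
  have "W ** diag2 1 (-1) ** matrix_inv W \<in> congruence_stabilizer \<C>"
    using W(2) assms(2) by blast
  with assms(3) have "(W ** diag2 1 (-1) ** matrix_inv W) ** C ** transpose (W ** diag2 1 (-1) ** matrix_inv W) = C"
    by (simp add: congruence_stabilizer_def)
  then have "diag2 1 (-1) ** (matrix_inv W ** C ** matrix_inv W) ** transpose (diag2 1 (-1)) =
      matrix_inv W ** C ** matrix_inv W"
    by (simp only: conj(2))
  then show ?thesis
    unfolding conj(3) reflection_congruent_iff by (simp add: mat2_eq_iff mat2_transpose_nth)
qed

lemma stabilizer_of_symmetric_not_conj_SO2:
  assumes "\<forall>C\<in>\<C>. transpose C = C"
  shows "\<not> conj_to (congruence_stabilizer \<C>) SO2"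
proof
  assume "conj_to (congruence_stabilizer \<C>) SO2"
  then obtain W where W: "sym_posdef W" "congruence_stabilizer \<C> = (\<lambda>Q. W ** Q ** matrix_inv W) ` SO2"
    by (auto simp: conj_to_def)
  have "transpose W = W" "invertible W"
    using W(1) sym_posdef_invertible by (auto simp: sym_posdef_def)
  note W' = this
  let ?B = "W ** diag2 1 (-1) ** matrix_inv W"
  have rot: "W ** rot90 ** matrix_inv W \<in> congruence_stabilizer \<C>"
    using W(2) rot90_in_SO2 by blast
  have "?B ** C ** transpose ?B = C" if "C \<in> \<C>" for C
  proof -
    let ?Y = "matrix_inv W ** C ** matrix_inv W"
    note conj = conj_congruence_iff[OF W', where C = C]
    from rot that have "(W ** rot90 ** matrix_inv W) ** C ** transpose (W ** rot90 ** matrix_inv W) = C"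
      by (simp add: congruence_stabilizer_def)
    then have "rot90 ** ?Y ** transpose rot90 = ?Y" by (simp only: conj(2))
    moreover have "transpose ?Y = ?Y" using assms that conj(3) by blast
    ultimately have "?Y $ 1 $ 2 = 0 \<and> ?Y $ 2 $ 1 = 0"
      by (intro off_diagonal_zero_if_rotation_congruent)
    then show ?thesis by (simp only: conj(2) reflection_congruent_iff)
  qed
  moreover have "invertible ?B"
    using \<open>invertible W\<close> invertible_reflection matrix_inv_cancel[OF \<open>invertible W\<close>]
    by (intro invertible_mult) (auto simp: invertible_def)
  ultimately have "?B \<in> (\<lambda>Q. W ** Q ** matrix_inv W) ` SO2"
    unfolding W(2)[symmetric] by (simp add: congruence_stabilizer_def)
  then obtain R where "R \<in> SO2" "?B = W ** R ** matrix_inv W" by blast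
  then have "diag2 1 (-1) \<in> SO2"
    using matrix_conj_inj[OF \<open>invertible W\<close>] by metis
  then show False using det_reflection by (simp add: SO2_def)
qed

theorem lemmaA3:
  fixes M :: "'w measure" and X :: "real^'m \<Rightarrow> 'w \<Rightarrow> real^2"
    and E :: "real^'m^'m" and H :: "real^2^2"
  assumes "OFBF M X E H"
    and "standing_eig_assumption E H"
    and "\<exists>\<mu> g. spectral_rep M X \<mu> g \<and> cond_NS \<mu> g"
  shows "(conj_to (Gran M X) D2 \<longrightarrow> - mat 1 \<in> Gdom M X)
       \<and> (conj_to (Gran M X) SO2 \<longrightarrow> - mat 1 \<notin> Gdom M X)
       \<and> (conj_to (Gran M X) O2 \<longrightarrow> - mat 1 \<in> Gdom M X)"
proof -
  obtain \<mu> g where spectral: "spectral_rep M X \<mu> g" using assms(3) by blast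
  have M: "prob_space M" and gauss: "centered_gaussian_family M X"
    using assms(1) by (simp_all add: OFBF_def centered_gaussian_field_eq_family)
  have int: "cross_integrable M X"
    by (rule spectral_rep_cross_integrable[OF spectral])
  let ?\<C> = "{cross_cov M X s t | s t. True}"
  have Gran: "Gran M X = congruence_stabilizer ?\<C>"
    by (rule Gran_eq_congruence_stabilizer[OF M gauss int])
  have Gdom: "- mat 1 \<in> Gdom M X \<longleftrightarrow> (\<forall>C\<in>?\<C>. transpose C = C)"
    using neg_mat_one_in_Gdom_iff[OF M gauss spectral] by blast
  show ?thesis
    unfolding Gran Gdom
    using symmetric_if_stabilizer_conj_reflection[of ?\<C>] reflection_in_D2_O2
      stabilizer_of_symmetric_not_conj_SO2[of ?\<C>] by blast
qed

end
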